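(* Let $n\geq 1$ and let $x_1,\dots,x_n\in(0,\tfrac12]$ be not all equal. With $A_n,G_n,A'_n,G'_n$ and $I$ as in the context, $$\frac{A'_n}{G'_n}<\left(\frac{A_n}{G_n}\right)^{\frac{A_n+G_n}{A'_n+G'_n}\cdot\frac{A'_n-G'_n}{A_n-G_n}}<\min\left\{\left(\frac{A_n}{G_n}\right)^{\frac{A_n+G_n}{A'_n+G'_n}},\left(\frac{A_n}{G_n}\right)^{\frac{A'_n-G'_n}{A_n-G_n}}\right\}<\frac{A_n}{G_n},$$ $$\frac{A'_n}{G'_n}<\left(\frac{A'_n}{G'_n}\right)^{\frac{I(A'_n,G'_n)}{I(A_n,G_n)}\cdot\frac{A_n-G_n}{A'_n-G'_n}}<\frac{A_n}{G_n},$$ and $$\frac{A_nG_n}{A'_nG'_n}<\min\left\{\left[\frac{\frac{1}{A'_n-G'_n}\ln\frac{A'_n}{G'_n}}{\frac{1}{A_n-G_n}\ln\frac{A_n}{G_n}}\right]^2,\ \left[\frac{\frac{1}{{A'_n}^n-{G'_n}^n}\ln\frac{{A'_n}^n}{{G'_n}^n}}{\frac{1}{{A_n}^n-{G_n}^n}\ln\frac{{A_n}^n}{{G_n}^n}}\right]^{\frac2n}\right\}<1.$$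
   Context: $A_n=\frac1n\sum_{i=1}^n x_i$ and $G_n=\prod_{i=1}^n x_i^{1/n}$ are the arithmetic and geometric means of $x_1,\dots,x_n$; $A'_n=\frac1n\sum_{i=1}^n(1-x_i)$ and $G'_n=\prod_{i=1}^n(1-x_i)^{1/n}$ are the arithmetic and geometric means of $1-x_1,\dots,1-x_n$. For $u,v>0$ the identric mean is $I(u,v)=\frac{1}{e}\left(\frac{u^u}{v^v}\right)^{1/(u-v)}$ if $u\neq v$ and $I(u,u)=u$. *)

theory Defs
  imports Complex_Main
begin

definition AM :: "nat \<Rightarrow> (nat \<Rightarrow> real) \<Rightarrow> real" where
  "AM n x = (1 / real n) * (\<Sum>i<n. x i)"

definition GM :: "nat \<Rightarrow> (nat \<Rightarrow> real) \<Rightarrow> real" where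
  "GM n x = (\<Prod>i<n. x i powr (1 / real n))"

definition AM' :: "nat \<Rightarrow> (nat \<Rightarrow> real) \<Rightarrow> real" where
  "AM' n x = (1 / real n) * (\<Sum>i<n. 1 - x i)"

definition GM' :: "nat \<Rightarrow> (nat \<Rightarrow> real) \<Rightarrow> real" where
  "GM' n x = (\<Prod>i<n. (1 - x i) powr (1 / real n))"

definition identric :: "real \<Rightarrow> real \<Rightarrow> real" where
  "identric u v = (if u = v then u
     else (1 / exp 1) * ((u powr u) / (v powr v)) powr (1 / (u - v)))"

end

theory Submission
  imports Defs
begin

(*
  All x i lie in (0, 1/2] and all 1 - x i in [1/2, 1), and both families have the same
  variance V. Expanding ln to second order around the arithmetic mean, with a remainder
  2 (y - a)^2 that is an upper bound on one side of 1/2 and a lower bound on the other, gives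
  ln (A'/G') <= 2 V < ln (A/G); expanding around the geometric mean gives likewise
  (A' - G') - (A' - G')^2 <= V < (A - G) - (A - G)^2. Hence A'/G' < A/G and A' - G' < A - G,
  while G < A <= 1/2 <= G' < A'.

  Each of the three chains then compares a ratio M(a, g) / L(a, g) at (A, G) and at (A', G'),
  where L is the logarithmic mean and M is the arithmetic mean, the identric mean, or (after
  squaring) the geometric mean. By homogeneity such a ratio depends only on t = a/g, and in
  all three cases it is strictly increasing in t, which is checked by differentiation.
*)

section \<open>Elementary logarithmic inequalities\<close>

lemma DERIV_pos_imp_less:
  fixes f f' :: "real \<Rightarrow> real"
  assumes "s < t"
    and deriv: "\<And>u. s \<le> u \<Longrightarrow> u \<le> t \<Longrightarrow> (f has_real_derivative f' u) (at u)"
    and pos: "\<And>u. s < u \<Longrightarrow> u < t \<Longrightarrow> 0 < f' u"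
  shows "f s < f t"
proof (rule DERIV_pos_imp_increasing_open[OF \<open>s < t\<close>])
  show "\<exists>y. (f has_real_derivative y) (at u) \<and> 0 < y" if "s < u" "u < t" for u
    using deriv[of u] pos[of u] that by (intro exI[of _ "f' u"]) auto
  show "continuous_on {s..t} f"
    using deriv by (meson DERIV_isCont atLeastAtMost_iff continuous_at_imp_continuous_on)
qed

lemma ln_quadratic_bounds:
  fixes t :: real
  shows "0 < t \<Longrightarrow> t < 1 \<Longrightarrow> ln t < t - 1 - (t - 1)^2 / 2"
    and "1 < t \<Longrightarrow> t - 1 - (t - 1)^2 / 2 < ln t"
proof -
  define f where "f u = ln u - (u - 1) + (u - 1)^2 / 2" for u :: real
  have deriv: "(f has_real_derivative (u - 1)^2 / u) (at u)" if "0 < u" for u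
    unfolding f_def using that
    by (auto intro!: derivative_eq_intros simp: field_simps power2_eq_square)
  show "ln t < t - 1 - (t - 1)^2 / 2" if "0 < t" "t < 1"
  proof -
    have "f t < f 1" by (rule DERIV_pos_imp_less[OF \<open>t < 1\<close> deriv]) (use that in auto)
    then show ?thesis by (simp add: f_def)
  qed
  show "t - 1 - (t - 1)^2 / 2 < ln t" if "1 < t"
  proof -
    have "f 1 < f t" by (rule DERIV_pos_imp_less[OF \<open>1 < t\<close> deriv]) (use that in auto)
    then show ?thesis by (simp add: f_def)
  qed
qed

lemma ln_half_diff_inverse_bounds:
  fixes t :: real
  shows "0 < t \<Longrightarrow> t < 1 \<Longrightarrow> (t - 1 / t) / 2 < ln t"
    and "1 < t \<Longrightarrow> ln t < (t - 1 / t) / 2"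
proof -
  define f where "f u = (u - 1 / u) / 2 - ln u" for u :: real
  have deriv: "(f has_real_derivative (1 - 1 / u)^2 / 2) (at u)" if "0 < u" for u
    unfolding f_def using that
    by (auto intro!: derivative_eq_intros simp: field_simps power2_eq_square)
  show "(t - 1 / t) / 2 < ln t" if "0 < t" "t < 1"
  proof -
    have "f t < f 1" by (rule DERIV_pos_imp_less[OF \<open>t < 1\<close> deriv]) (use that in auto)
    then show ?thesis by (simp add: f_def)
  qed
  show "ln t < (t - 1 / t) / 2" if "1 < t"
  proof -
    have "f 1 < f t" by (rule DERIV_pos_imp_less[OF \<open>1 < t\<close> deriv]) (use that in auto)
    then show ?thesis by (simp add: f_def)
  qed
qed

lemma ln_bounds_gt_one:
  fixes t :: real
  assumes "1 < t"
  shows "1 - 1 / t < ln t" and "ln t < t - 1"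
  using ln_diff_less[of 1 t] ln_diff_less[of t 1] assms by (simp_all add: diff_divide_distrib)

lemma ln_greater_ratio:
  fixes t :: real
  assumes "1 < t"
  shows "2 * (t - 1) / (t + 1) < ln t"
proof -
  define f where "f u = ln u - 2 * (u - 1) / (u + 1)" for u :: real
  have "f 1 < f t"
  proof (rule DERIV_pos_imp_less[OF assms, where f' = "\<lambda>u. 1 / u - 4 / (u + 1)^2"])
    show "(f has_real_derivative 1 / u - 4 / (u + 1)^2) (at u)" if "1 \<le> u" for u
      unfolding f_def using that
      by (auto intro!: derivative_eq_intros simp: field_simps power2_eq_square)
    show "0 < 1 / u - 4 / (u + 1)^2" if "1 < u" for u :: real
    proof -
      have "u \<noteq> 0" "u + 1 \<noteq> 0" using that by auto
      then have "1 / u - 4 / (u + 1)^2 = (u - 1)^2 / (u * (u + 1)^2)"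
        by (simp add: field_simps) (simp add: power2_eq_square algebra_simps)
      then show ?thesis using that by simp
    qed
  qed
  then show ?thesis by (simp add: f_def)
qed

lemma quadratic_less_ln_remainder:
  fixes t c :: real
  assumes "0 < t" "t \<noteq> 1" "c \<le> 1/2" "2 * t * c \<le> 1"
  shows "c * (t - 1)^2 < t - 1 - ln t"
proof (cases "t < 1")
  case True
  have "c * (t - 1)^2 \<le> (t - 1)^2 / 2"
    using mult_right_mono[OF assms(3) zero_le_power2[of "t - 1"]] by simp
  then show ?thesis using ln_quadratic_bounds(1)[OF assms(1) True] by linarith
next
  case False
  then have t: "1 < t" using assms(2) by simp
  have "c * (t - 1)^2 \<le> (t - 1)^2 / (2 * t)"
    using assms(4) t by (simp add: field_simps mult_right_mono)
  also have "\<dots> = t - 1 - (t - 1 / t) / 2" using t by (simp add: field_simps power2_eq_square)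
  finally show ?thesis using ln_half_diff_inverse_bounds(2)[OF t] by linarith
qed

lemma ln_remainder_le_quadratic:
  fixes t c :: real
  assumes "0 < t" "1/2 \<le> c" "1 \<le> 2 * t * c"
  shows "t - 1 - ln t \<le> c * (t - 1)^2"
proof -
  consider "t < 1" | "t = 1" | "1 < t" by linarith
  then show ?thesis
  proof cases
    case 1
    have "t - 1 - (t - 1 / t) / 2 = (t - 1)^2 / (2 * t)"
      using assms(1) by (simp add: field_simps power2_eq_square)
    also have "\<dots> \<le> c * (t - 1)^2"
      using mult_right_mono[of "1 / (2 * t)" c "(t - 1)^2"] assms by (simp add: field_simps)
    finally show ?thesis using ln_half_diff_inverse_bounds(1)[OF assms(1) 1] by linarith
  next
    case 3
    have "(t - 1)^2 / 2 \<le> c * (t - 1)^2"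
      using mult_right_mono[OF assms(2) zero_le_power2[of "t - 1"]] by simp
    then show ?thesis using ln_quadratic_bounds(2)[OF 3] by linarith
  qed simp
qed

lemma ln_less_tangent_minus_sq:
  fixes x a :: real
  assumes "0 < x" "x \<le> 1/2" "0 < a" "a \<le> 1/2" "x \<noteq> a"
  shows "ln x < ln a + (x - a) / a - 2 * (x - a)^2"
proof -
  have "2 * (x / a) * (2 * a^2) \<le> 1"
    using mult_mono[of x "1/2" a "1/2"] assms by (simp add: power2_eq_square)
  moreover have "2 * a^2 \<le> 1/2"
    using mult_mono[of a "1/2" a "1/2"] assms by (simp add: power2_eq_square)
  ultimately have "2 * a^2 * (x / a - 1)^2 < x / a - 1 - ln (x / a)"
    using assms by (intro quadratic_less_ln_remainder) auto
  moreover have "2 * a^2 * (x / a - 1)^2 = 2 * (x - a)^2" "x / a - 1 = (x - a) / a"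
    using assms by (simp_all add: field_simps power2_eq_square)
  ultimately show ?thesis
    using assms by (simp add: ln_div)
qed

lemma tangent_minus_sq_le_ln:
  fixes y a :: real
  assumes "1/2 \<le> y" "1/2 \<le> a"
  shows "ln a + (y - a) / a - 2 * (y - a)^2 \<le> ln y"
proof -
  have "1 \<le> 2 * (y / a) * (2 * a^2)"
    using mult_mono[of "1/2" y "1/2" a] assms by (simp add: power2_eq_square)
  moreover have "1/2 \<le> 2 * a^2"
    using mult_mono[of "1/2" a "1/2" a] assms by (simp add: power2_eq_square)
  ultimately have "y / a - 1 - ln (y / a) \<le> 2 * a^2 * (y / a - 1)^2"
    using assms by (intro ln_remainder_le_quadratic) auto
  moreover have "2 * a^2 * (y / a - 1)^2 = 2 * (y - a)^2" "y / a - 1 = (y - a) / a"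
    using assms by (simp_all add: field_simps power2_eq_square)
  ultimately show ?thesis
    using assms by (simp add: ln_div)
qed

lemma mult_ln_div_less:
  fixes x g :: real
  assumes "0 < x" "x \<le> 1/2" "0 < g" "g \<le> 1/2" "x \<noteq> g"
  shows "g + g * ln (x / g) < x - (x - g)^2"
proof -
  have "g * (x / g - 1)^2 < x / g - 1 - ln (x / g)"
    using assms by (intro quadratic_less_ln_remainder) (auto simp: field_simps)
  then have "g * (g * (x / g - 1)^2) < g * (x / g - 1 - ln (x / g))"
    using assms(3) by simp
  moreover have "g * (g * (x / g - 1)^2) = (x - g)^2"
    and "g * (x / g - 1 - ln (x / g)) = x - g - g * ln (x / g)"
    using assms by (simp_all add: field_simps power2_eq_square)
  ultimately show ?thesis by simp
qed

lemma mult_ln_div_ge: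
  fixes y g :: real
  assumes "1/2 \<le> y" "1/2 \<le> g"
  shows "y - (y - g)^2 \<le> g + g * ln (y / g)"
proof -
  have "y / g - 1 - ln (y / g) \<le> g * (y / g - 1)^2"
    using assms by (intro ln_remainder_le_quadratic) (auto simp: field_simps)
  then have "g * (y / g - 1 - ln (y / g)) \<le> g * (g * (y / g - 1)^2)"
    using assms(2) by simp
  moreover have "g * (g * (y / g - 1)^2) = (y - g)^2"
    and "g * (y / g - 1 - ln (y / g)) = y - g - g * ln (y / g)"
    using assms by (simp_all add: field_simps power2_eq_square)
  ultimately show ?thesis by simp
qed

section \<open>Means of a finite sequence\<close>

definition Var :: "nat \<Rightarrow> (nat \<Rightarrow> real) \<Rightarrow> real" where
  "Var n y = AM n (\<lambda>i. (y i - AM n y)^2)"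

lemma sum_eq_AM: "n \<noteq> 0 \<Longrightarrow> (\<Sum>i<n. y i) = n * AM n y"
  by (simp add: AM_def)

lemma AM_one_minus: "n \<noteq> 0 \<Longrightarrow> AM n (\<lambda>i. 1 - y i) = 1 - AM n y"
  by (simp add: AM_def sum_subtractf field_simps)

lemma AM_const: "n \<noteq> 0 \<Longrightarrow> AM n (\<lambda>_. c) = c"
  by (simp add: AM_def)

lemma AM_mono: "\<forall>i<n. y i \<le> z i \<Longrightarrow> AM n y \<le> AM n z"
  unfolding AM_def by (intro mult_left_mono sum_mono) auto

lemma GM_pos: "\<forall>i<n. 0 < y i \<Longrightarrow> 0 < GM n y"
  unfolding GM_def by (intro prod_pos) auto

lemma sum_ln_eq_ln_GM:
  assumes "\<forall>i<n. 0 < y i"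
  shows "(\<Sum>i<n. ln (y i)) = n * ln (GM n y)"
proof -
  have "ln (GM n y) = (\<Sum>i<n. ln (y i powr (1 / n)))"
    unfolding GM_def using assms by (subst ln_prod) auto
  also have "\<dots> = (\<Sum>i<n. ln (y i) / n)"
    using assms by (intro sum.cong) (auto simp: ln_powr)
  finally have "ln (GM n y) = (\<Sum>i<n. ln (y i) / n)" .
  then show ?thesis by (cases "n = 0") (simp_all add: sum_divide_distrib[symmetric])
qed

lemma GM_ge:
  assumes "n \<noteq> 0" "0 < c" "\<forall>i<n. c \<le> y i"
  shows "c \<le> GM n y"
proof -
  have pos: "\<forall>i<n. 0 < y i" using assms(2,3) by force
  have "n * ln c \<le> (\<Sum>i<n. ln (y i))"
    using sum_mono[of "{..<n}" "\<lambda>_. ln c" "\<lambda>i. ln (y i)"] assms(2,3) by force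
  then have "ln c \<le> ln (GM n y)"
    using assms(1) by (simp add: sum_ln_eq_ln_GM[OF pos])
  then show ?thesis using assms(2) GM_pos[OF pos] by simp
qed

lemma sum_sq_dev_eq:
  assumes "n \<noteq> 0"
  shows "(\<Sum>i<n. (y i - c)^2) = n * Var n y + n * (AM n y - c)^2"
proof -
  let ?A = "AM n y"
  have "(\<Sum>i<n. (y i - c)^2) = (\<Sum>i<n. (y i - ?A)^2 + 2 * (?A - c) * (y i - ?A) + (?A - c)^2)"
    by (intro sum.cong) (auto simp: power2_eq_square algebra_simps)
  also have "\<dots> = (\<Sum>i<n. (y i - ?A)^2) + 2 * (?A - c) * (\<Sum>i<n. y i - ?A) + n * (?A - c)^2"
    by (simp add: sum.distrib sum_distrib_left)
  also have "(\<Sum>i<n. y i - ?A) = 0"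
    using assms by (simp add: sum_subtractf sum_eq_AM)
  finally show ?thesis
    using assms by (simp add: sum_eq_AM Var_def)
qed

lemma Var_one_minus: "n \<noteq> 0 \<Longrightarrow> Var n (\<lambda>i. 1 - y i) = Var n y"
  by (simp add: Var_def AM_one_minus power2_commute)

lemma sum_less_sum_nonconst:
  fixes f g :: "nat \<Rightarrow> real"
  assumes "\<And>i. i < n \<Longrightarrow> y i = c \<Longrightarrow> f i = g i"
    and "\<And>i. i < n \<Longrightarrow> y i \<noteq> c \<Longrightarrow> f i < g i"
    and "\<exists>i<n. \<exists>j<n. y i \<noteq> y j"
  shows "(\<Sum>i<n. f i) < (\<Sum>i<n. g i)"
proof (rule sum_strict_mono_ex1)
  show "\<forall>i\<in>{..<n}. f i \<le> g i" using assms(1,2) by (metis lessThan_iff order_le_less)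
  show "\<exists>i\<in>{..<n}. f i < g i" using assms(2,3) by (metis lessThan_iff)
qed simp

lemma GM_lt_AM:
  assumes pos: "\<forall>i<n. 0 < y i" and nonconst: "\<exists>i<n. \<exists>j<n. y i \<noteq> y j"
  shows "GM n y < AM n y"
proof -
  have n: "n \<noteq> 0" using nonconst by auto
  have "0 < (\<Sum>i<n. y i)" using n pos by (intro sum_pos) auto
  then have A: "0 < AM n y" using n by (simp add: AM_def)
  have "(\<Sum>i<n. ln (y i) - ln (AM n y)) < (\<Sum>i<n. (y i - AM n y) / AM n y)"
    using pos A by (intro sum_less_sum_nonconst[OF _ _ nonconst, where c = "AM n y"])
      (auto intro: ln_diff_less)
  also have "\<dots> = 0"
    using n by (simp add: sum_divide_distrib[symmetric] sum_subtractf sum_eq_AM)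
  finally have "ln (GM n y) < ln (AM n y)"
    using n pos by (simp add: sum_subtractf sum_ln_eq_ln_GM)
  then show ?thesis using A pos GM_pos by simp
qed

lemma sum_ln_div_GM:
  assumes "\<forall>i<n. 0 < y i"
  shows "(\<Sum>i<n. ln (y i / GM n y)) = 0"
proof -
  have "(\<Sum>i<n. ln (y i / GM n y)) = (\<Sum>i<n. ln (y i) - ln (GM n y))"
    using assms GM_pos[OF assms] by (intro sum.cong) (auto simp: ln_div)
  then show ?thesis using assms by (simp add: sum_subtractf sum_ln_eq_ln_GM)
qed

lemma ln_GM_lt_ln_AM_minus_Var:
  assumes range: "\<forall>i<n. 0 < y i \<and> y i \<le> 1/2" and nonconst: "\<exists>i<n. \<exists>j<n. y i \<noteq> y j"
  shows "ln (GM n y) < ln (AM n y) - 2 * Var n y"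
proof -
  define A where "A = AM n y"
  have n: "n \<noteq> 0" using nonconst by auto
  have pos: "\<forall>i<n. 0 < y i" using range by blast
  have "0 < A" unfolding A_def using GM_pos[OF pos] GM_lt_AM[OF pos nonconst] by linarith
  moreover have "A \<le> 1/2" unfolding A_def using AM_mono[of n y "\<lambda>_. 1/2"] AM_const n range by simp
  ultimately have "(\<Sum>i<n. ln (y i)) < (\<Sum>i<n. ln A + (y i - A) / A - 2 * (y i - A)^2)"
    using range by (intro sum_less_sum_nonconst[OF _ _ nonconst, where c = A])
      (auto intro: ln_less_tangent_minus_sq)
  also have "\<dots> = n * (ln A - 2 * Var n y)"
    using n by (simp add: sum.distrib sum_subtractf sum_divide_distrib[symmetric]
        sum_distrib_left[symmetric] sum_eq_AM A_def Var_def right_diff_distrib)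
  finally have "n * ln (GM n y) < n * (ln A - 2 * Var n y)"
    by (simp add: sum_ln_eq_ln_GM[OF pos])
  then show ?thesis using n by (simp add: A_def)
qed

lemma ln_AM_minus_Var_le_ln_GM:
  assumes n: "n \<noteq> 0" and range: "\<forall>i<n. 1/2 \<le> y i"
  shows "ln (AM n y) - 2 * Var n y \<le> ln (GM n y)"
proof -
  define A where "A = AM n y"
  have "1/2 \<le> A" unfolding A_def using AM_mono[of n "\<lambda>_. 1/2" y] AM_const n range by simp
  then have "(\<Sum>i<n. ln A + (y i - A) / A - 2 * (y i - A)^2) \<le> (\<Sum>i<n. ln (y i))"
    using range by (intro sum_mono tangent_minus_sq_le_ln) auto
  moreover have "(\<Sum>i<n. ln A + (y i - A) / A - 2 * (y i - A)^2) = n * (ln A - 2 * Var n y)"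
    using n by (simp add: sum.distrib sum_subtractf sum_divide_distrib[symmetric]
        sum_distrib_left[symmetric] sum_eq_AM A_def Var_def right_diff_distrib)
  moreover have "\<forall>i<n. 0 < y i" using range by force
  ultimately have "n * (ln A - 2 * Var n y) \<le> n * ln (GM n y)"
    using sum_ln_eq_ln_GM by metis
  then show ?thesis using n by (simp add: A_def)
qed

lemma Var_lt_AM_GM_gap:
  assumes range: "\<forall>i<n. 0 < y i \<and> y i \<le> 1/2" and nonconst: "\<exists>i<n. \<exists>j<n. y i \<noteq> y j"
  shows "Var n y < (AM n y - GM n y) - (AM n y - GM n y)^2"
proof -
  define A G where "A = AM n y" and "G = GM n y"
  have n: "n \<noteq> 0" using nonconst by auto
  have pos: "\<forall>i<n. 0 < y i" using range by blast
  have "0 < G" "G < A" unfolding A_def G_def using GM_pos[OF pos] GM_lt_AM[OF pos nonconst] by auto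
  moreover have "A \<le> 1/2" unfolding A_def using AM_mono[of n y "\<lambda>_. 1/2"] AM_const n range by simp
  ultimately have "(\<Sum>i<n. G + G * ln (y i / G)) < (\<Sum>i<n. y i - (y i - G)^2)"
    using range by (intro sum_less_sum_nonconst[OF _ _ nonconst, where c = G])
      (auto intro: mult_ln_div_less)
  moreover have "(\<Sum>i<n. G + G * ln (y i / G)) = n * G"
    using sum_ln_div_GM[OF pos] by (simp add: sum.distrib sum_distrib_left[symmetric] G_def)
  moreover have "(\<Sum>i<n. y i - (y i - G)^2) = n * (A - Var n y - (A - G)^2)"
    using n sum_sq_dev_eq[OF n, of y G] by (simp add: sum_subtractf sum_eq_AM A_def algebra_simps)
  ultimately show ?thesis using n by (simp add: A_def G_def)
qed

lemma AM_GM_gap_le_Var: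
  assumes n: "n \<noteq> 0" and range: "\<forall>i<n. 1/2 \<le> y i"
  shows "(AM n y - GM n y) - (AM n y - GM n y)^2 \<le> Var n y"
proof -
  define A G where "A = AM n y" and "G = GM n y"
  have pos: "\<forall>i<n. 0 < y i" using range by force
  have "1/2 \<le> G" unfolding G_def using GM_ge[OF n _ range] by simp
  then have "(\<Sum>i<n. y i - (y i - G)^2) \<le> (\<Sum>i<n. G + G * ln (y i / G))"
    using range by (intro sum_mono mult_ln_div_ge) auto
  moreover have "(\<Sum>i<n. G + G * ln (y i / G)) = n * G"
    using sum_ln_div_GM[OF pos] by (simp add: sum.distrib sum_distrib_left[symmetric] G_def)
  moreover have "(\<Sum>i<n. y i - (y i - G)^2) = n * (A - Var n y - (A - G)^2)"
    using n sum_sq_dev_eq[OF n, of y G] by (simp add: sum_subtractf sum_eq_AM A_def algebra_simps)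
  ultimately show ?thesis using n by (simp add: A_def G_def)
qed

lemma AM_GM_ratio_one_minus_less:
  assumes range: "\<forall>i<n. 0 < x i \<and> x i \<le> 1/2" and nonconst: "\<exists>i<n. \<exists>j<n. x i \<noteq> x j"
  shows "AM n (\<lambda>i. 1 - x i) / GM n (\<lambda>i. 1 - x i) < AM n x / GM n x"
proof -
  define A G A' G' where "A = AM n x" and "G = GM n x"
    and "A' = AM n (\<lambda>i. 1 - x i)" and "G' = GM n (\<lambda>i. 1 - x i)"
  have n: "n \<noteq> 0" using nonconst by auto
  have pos: "\<forall>i<n. 0 < x i" and half: "\<forall>i<n. 1/2 \<le> 1 - x i" using range by auto
  have "0 < G" "G < A" using GM_pos[OF pos] GM_lt_AM[OF pos nonconst] by (simp_all add: A_def G_def)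
  moreover have "1/2 \<le> G'" using GM_ge[OF n _ half] by (simp add: G'_def)
  moreover have "A \<le> 1/2" using AM_mono[of n x "\<lambda>_. 1/2"] AM_const[OF n] range by (simp add: A_def)
  moreover have "A' = 1 - A" using AM_one_minus[OF n] by (simp add: A_def A'_def)
  moreover have "ln A' - ln G' \<le> 2 * Var n x"
    using ln_AM_minus_Var_le_ln_GM[OF n half] Var_one_minus[OF n] by (simp add: A'_def G'_def)
  moreover have "2 * Var n x < ln A - ln G"
    using ln_GM_lt_ln_AM_minus_Var[OF range nonconst] by (simp add: A_def G_def)
  ultimately have "ln (A' / G') < ln (A / G)" "0 < A' / G'" "0 < A / G" by (simp_all add: ln_div)
  then show ?thesis
    unfolding A_def[symmetric] G_def[symmetric] A'_def[symmetric] G'_def[symmetric] by simp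
qed

lemma less_of_diff_sq_less:
  fixes u v :: real
  assumes "u + v \<le> 1" "v - v^2 < u - u^2"
  shows "v < u"
proof (rule ccontr)
  assume "\<not> v < u"
  then have "(u - v) * (1 - u - v) \<le> 0" using assms(1) by (simp add: mult_nonpos_nonneg)
  then show False using assms(2) by (simp add: algebra_simps power2_eq_square)
qed

lemma AM_GM_gap_one_minus_less:
  assumes range: "\<forall>i<n. 0 < x i \<and> x i \<le> 1/2" and nonconst: "\<exists>i<n. \<exists>j<n. x i \<noteq> x j"
  shows "AM n (\<lambda>i. 1 - x i) - GM n (\<lambda>i. 1 - x i) < AM n x - GM n x"
proof (rule less_of_diff_sq_less)
  have n: "n \<noteq> 0" using nonconst by auto
  have pos: "\<forall>i<n. 0 < x i" and half: "\<forall>i<n. 1/2 \<le> 1 - x i" using range by auto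
  show "AM n (\<lambda>i. 1 - x i) - GM n (\<lambda>i. 1 - x i)
      - (AM n (\<lambda>i. 1 - x i) - GM n (\<lambda>i. 1 - x i))^2
      < AM n x - GM n x - (AM n x - GM n x)^2"
    using AM_GM_gap_le_Var[OF n half] Var_one_minus[OF n, of x] Var_lt_AM_GM_gap[OF range nonconst]
    by simp
  show "AM n x - GM n x + (AM n (\<lambda>i. 1 - x i) - GM n (\<lambda>i. 1 - x i)) \<le> 1"
    using GM_pos[OF pos] GM_ge[OF n _ half] AM_one_minus[OF n, of x] by simp
qed

section \<open>Ratios of two-variable means\<close>

definition log_mean :: "real \<Rightarrow> real \<Rightarrow> real" where
  "log_mean a g = (a - g) / ln (a / g)"

lemma log_mean_homogeneous: "g \<noteq> 0 \<Longrightarrow> log_mean a g = g * log_mean (a / g) 1"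
  by (simp add: log_mean_def right_diff_distrib)

lemma ln_identric:
  assumes "0 < a" "0 < g" "a \<noteq> g"
  shows "ln (identric a g) = (a * ln a - g * ln g) / (a - g) - 1"
  using assms by (simp add: identric_def ln_mult ln_div ln_powr)

lemma identric_pos: "0 < a \<Longrightarrow> 0 < g \<Longrightarrow> 0 < identric a g"
  by (simp add: identric_def)

lemma identric_homogeneous:
  assumes "0 < a" "0 < g"
  shows "identric a g = g * identric (a / g) 1"
proof (cases "a = g")
  case False
  have t: "0 < a / g" "a / g \<noteq> 1" using assms False by auto
  have "ln (identric a g) = ln (g * identric (a / g) 1)"
    using assms False t identric_pos[OF t(1), of 1]
    by (simp add: ln_identric ln_mult ln_div field_simps)
  then show ?thesis using assms t by (simp add: identric_pos)
qed (simp add: identric_def)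

lemma add_one_div_log_mean_mono:
  fixes s t :: real
  assumes "1 < s" "s < t"
  shows "(s + 1) / log_mean s 1 < (t + 1) / log_mean t 1"
proof -
  define f where "f u = (u + 1) * ln u / (u - 1)" for u :: real
  have "f s < f t"
  proof (rule DERIV_pos_imp_less[OF assms(2),
        where f' = "\<lambda>u. ((u + 1) * (u - 1) / u - 2 * ln u) / (u - 1)^2"])
    show "(f has_real_derivative ((u + 1) * (u - 1) / u - 2 * ln u) / (u - 1)^2) (at u)"
      if "s \<le> u" for u
      unfolding f_def using that assms
      by (auto intro!: derivative_eq_intros simp: field_simps power2_eq_square)
    show "0 < ((u + 1) * (u - 1) / u - 2 * ln u) / (u - 1)^2" if "s < u" for u
    proof -
      have "1 < u" using that assms by simp
      then have "2 * ln u < (u + 1) * (u - 1) / u"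
        using ln_half_diff_inverse_bounds(2) by (simp add: field_simps power2_eq_square)
      then show ?thesis using \<open>1 < u\<close> by simp
    qed
  qed
  then show ?thesis using assms by (simp add: f_def log_mean_def)
qed

lemma identric_div_log_mean_mono:
  fixes s t :: real
  assumes "1 < s" "s < t"
  shows "identric s 1 / log_mean s 1 < identric t 1 / log_mean t 1"
proof -
  define f where "f u = u * ln u / (u - 1) - 1 + ln (ln u) - ln (u - 1)" for u :: real
  have ln_eq: "ln (identric u 1 / log_mean u 1) = f u" if "1 < u" for u
    using that identric_pos[of u 1]
    by (simp add: f_def log_mean_def ln_identric ln_div ln_mult)
  have "f s < f t"
  proof (rule DERIV_pos_imp_less[OF assms(2),
        where f' = "\<lambda>u. ((u - 1)^2 - u * (ln u)^2) / (u * ln u * (u - 1)^2)"])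
    have "1 < u \<Longrightarrow>
        (f has_real_derivative ((u - 1)^2 - u * (ln u)^2) / (u * ln u * (u - 1)^2)) (at u)" for u
      unfolding f_def
      by (rule derivative_eq_intros refl | simp)+
        (simp add: divide_simps power2_eq_square, simp add: algebra_simps)
    then show "(f has_real_derivative ((u - 1)^2 - u * (ln u)^2) / (u * ln u * (u - 1)^2)) (at u)"
      if "s \<le> u" for u
      using that assms by simp
    show "0 < ((u - 1)^2 - u * (ln u)^2) / (u * ln u * (u - 1)^2)" if "s < u" for u
    proof -
      have u: "1 < u" using that assms by simp
      then have "ln (sqrt u) < (sqrt u - 1 / sqrt u) / 2"
        by (intro ln_half_diff_inverse_bounds(2)) simp
      then have "sqrt u * ln u < u - 1"
        using u by (simp add: ln_sqrt field_simps)
      then have "(sqrt u * ln u)^2 < (u - 1)^2"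
        using u by (intro power_strict_mono) auto
      then show ?thesis
        using u by (simp add: power_mult_distrib)
    qed
  qed
  then have "ln (identric s 1 / log_mean s 1) < ln (identric t 1 / log_mean t 1)"
    using assms by (simp add: ln_eq)
  moreover have "0 < identric u 1 / log_mean u 1" if "1 < u" for u
    using that identric_pos[of u 1] by (simp add: log_mean_def)
  ultimately show ?thesis using assms by simp
qed

lemma log_mean_sq_div_mono:
  fixes s t :: real
  assumes "1 < s" "s < t"
  shows "(log_mean s 1)^2 / s < (log_mean t 1)^2 / t"
proof -
  define f where "f u = 2 * ln (u - 1) - ln u - 2 * ln (ln u)" for u :: real
  have ln_eq: "ln ((log_mean u 1)^2 / u) = f u" if "1 < u" for u
    using that by (simp add: f_def log_mean_def ln_div ln_realpow)
  have "f s < f t"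
  proof (rule DERIV_pos_imp_less[OF assms(2),
        where f' = "\<lambda>u. ((u + 1) * ln u - 2 * (u - 1)) / (u * (u - 1) * ln u)"])
    show "(f has_real_derivative ((u + 1) * ln u - 2 * (u - 1)) / (u * (u - 1) * ln u)) (at u)"
      if "s \<le> u" for u
      unfolding f_def using that assms
      by (auto intro!: derivative_eq_intros simp: divide_simps power2_eq_square algebra_simps)
    show "0 < ((u + 1) * ln u - 2 * (u - 1)) / (u * (u - 1) * ln u)" if "s < u" for u
    proof -
      have u: "1 < u" using that assms by simp
      then have "2 * (u - 1) < (u + 1) * ln u"
        using ln_greater_ratio by (simp add: pos_divide_less_eq mult.commute)
      then show ?thesis using u by simp
    qed
  qed
  then have "ln ((log_mean s 1)^2 / s) < ln ((log_mean t 1)^2 / t)"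
    using assms by (simp add: ln_eq)
  moreover have "0 < (log_mean u 1)^2 / u" if "1 < u" for u
    using that by (simp add: log_mean_def)
  ultimately show ?thesis using assms by simp
qed

lemma log_mean_bounds:
  fixes a g :: real
  assumes "0 < g" "g < a"
  shows "g < log_mean a g" and "log_mean a g < a"
proof -
  define t where "t = a / g"
  have t: "1 < t" using assms by (simp add: t_def)
  have L: "log_mean a g = g * ((t - 1) / ln t)"
    using log_mean_homogeneous[of g a] assms by (simp add: t_def log_mean_def)
  have "1 < (t - 1) / ln t" using t ln_bounds_gt_one(2)[OF t] by simp
  from mult_strict_left_mono[OF this assms(1)] show "g < log_mean a g" by (simp add: L)
  have "t - 1 < t * ln t" using t ln_bounds_gt_one(1)[OF t] by (simp add: field_simps)
  then have "(t - 1) / ln t < t" using t by (simp add: divide_less_eq)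
  from mult_strict_left_mono[OF this assms(1)] show "log_mean a g < a"
    using assms(1) by (simp add: L t_def)
qed

lemma identric_bounds:
  fixes a g :: real
  assumes "0 < g" "g < a"
  shows "g < identric a g" and "identric a g < a"
proof -
  define t where "t = a / g"
  have t: "1 < t" using assms by (simp add: t_def)
  have I: "identric a g = g * identric t 1"
    using identric_homogeneous[of a g] assms by (simp add: t_def)
  have ln_I: "ln (identric t 1) = t * ln t / (t - 1) - 1"
    using t by (simp add: ln_identric)
  have "t - 1 < t * ln t" using t ln_bounds_gt_one(1)[OF t] by (simp add: field_simps)
  then have "0 < ln (identric t 1)" using t by (simp add: ln_I field_simps)
  then have "1 < identric t 1" using identric_pos[of t 1] t by simp
  from mult_strict_left_mono[OF this assms(1)] show "g < identric a g" by (simp add: I)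
  have "t * ln t / (t - 1) - 1 < ln t" using t ln_bounds_gt_one(2)[OF t] by (simp add: field_simps)
  then have "ln (identric t 1) < ln t" by (simp add: ln_I)
  then have "identric t 1 < t" using t identric_pos[of t 1] by simp
  from mult_strict_left_mono[OF this assms(1)] show "identric a g < a"
    using assms(1) by (simp add: I t_def)
qed

lemma add_div_log_mean_less:
  fixes a g a' g' :: real
  assumes "0 < g" "g < a" "0 < g'" "g' < a'" "a' / g' < a / g"
  shows "(a' + g') / log_mean a' g' < (a + g) / log_mean a g"
proof -
  have eq: "(b + h) / log_mean b h = (b / h + 1) / log_mean (b / h) 1" if "0 < h" for b h :: real
  proof -
    have "b + h = h * (b / h + 1)" using that by (simp add: field_simps)
    then show ?thesis using that by (simp add: log_mean_homogeneous[of h b])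
  qed
  show ?thesis
    unfolding eq[OF \<open>0 < g\<close>] eq[OF \<open>0 < g'\<close>]
    using add_one_div_log_mean_mono[of "a' / g'" "a / g"] assms by simp
qed

lemma identric_div_log_mean_less:
  fixes a g a' g' :: real
  assumes "0 < g" "g < a" "0 < g'" "g' < a'" "a' / g' < a / g"
  shows "identric a' g' / log_mean a' g' < identric a g / log_mean a g"
proof -
  have eq: "identric b h / log_mean b h = identric (b / h) 1 / log_mean (b / h) 1"
    if "0 < h" "0 < b" for b h :: real
    using that by (simp add: identric_homogeneous[of b h] log_mean_homogeneous[of h b])
  have "0 < a" "0 < a'" using assms by auto
  then show ?thesis
    unfolding eq[OF \<open>0 < g\<close> \<open>0 < a\<close>] eq[OF \<open>0 < g'\<close> \<open>0 < a'\<close>]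
    using identric_div_log_mean_mono[of "a' / g'" "a / g"] assms by simp
qed

lemma log_mean_sq_div_mult_less:
  fixes a g a' g' :: real
  assumes "0 < g" "g < a" "0 < g'" "g' < a'" "a' / g' < a / g"
  shows "(log_mean a' g')^2 / (a' * g') < (log_mean a g)^2 / (a * g)"
proof -
  have eq: "(log_mean b h)^2 / (b * h) = (log_mean (b / h) 1)^2 / (b / h)" if "0 < h" for b h :: real
    using that by (simp add: log_mean_homogeneous[of h b] power_mult_distrib power2_eq_square field_simps)
  show ?thesis
    unfolding eq[OF \<open>0 < g\<close>] eq[OF \<open>0 < g'\<close>]
    using log_mean_sq_div_mono[of "a' / g'" "a / g"] assms by simp
qed

lemma powr_bounds_of_mean_ratios:
  fixes a g a' g' :: real
  assumes "0 < g" "g < a" "a \<le> g'" "g' < a'" "a' / g' < a / g" "a' - g' < a - g"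
  shows "a' / g' < (a / g) powr (((a + g) / (a' + g')) * ((a' - g') / (a - g)))
     \<and> (a / g) powr (((a + g) / (a' + g')) * ((a' - g') / (a - g)))
         < min ((a / g) powr ((a + g) / (a' + g'))) ((a / g) powr ((a' - g') / (a - g)))
     \<and> min ((a / g) powr ((a + g) / (a' + g'))) ((a / g) powr ((a' - g') / (a - g))) < a / g"
proof -
  define r r' e1 e2 where "r = a / g" and "r' = a' / g'"
    and "e1 = (a + g) / (a' + g')" and "e2 = (a' - g') / (a - g)"
  have r': "1 < r'" and "r' < r" using assms by (auto simp: r_def r'_def)
  then have r: "1 < r" by simp
  have "0 < e1" "e1 < 1" using assms by (auto simp: e1_def)
  moreover have "0 < e2" "e2 < 1" using assms by (auto simp: e2_def)
  ultimately have e: "e1 * e2 < e1" "e1 * e2 < e2" "0 < e1 * e2" by simp_all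
  have L: "log_mean a g = (a - g) / ln r" "log_mean a' g' = (a' - g') / ln r'"
    by (simp_all add: log_mean_def r_def r'_def)
  have "(a' + g') * ln r' / (a' - g') < (a + g) * ln r / (a - g)"
    using add_div_log_mean_less[of g a g' a'] assms by (simp add: L)
  from mult_strict_left_mono[OF this, of "(a' - g') / (a' + g')"]
  have "ln r' < e1 * e2 * ln r"
    using assms by (simp add: e1_def e2_def ac_simps)
  then have "r' < r powr (e1 * e2)"
    using r r' by (simp add: ln_less_cancel_iff[symmetric] del: ln_less_cancel_iff)
  moreover have "r powr (e1 * e2) < min (r powr e1) (r powr e2)"
    using e r by simp
  moreover have "r powr e1 < r" using powr_less_mono[OF \<open>e1 < 1\<close> r] r by simp
  ultimately show ?thesis unfolding r_def r'_def e1_def e2_def by linarith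
qed

lemma identric_powr_bounds_of_mean_ratios:
  fixes a g a' g' :: real
  assumes "0 < g" "g < a" "a \<le> g'" "g' < a'" "a' / g' < a / g" "a' - g' < a - g"
  shows "a' / g' < (a' / g') powr ((identric a' g' / identric a g) * ((a - g) / (a' - g')))
     \<and> (a' / g') powr ((identric a' g' / identric a g) * ((a - g) / (a' - g'))) < a / g"
proof -
  define r r' I I' E where "r = a / g" and "r' = a' / g'" and "I = identric a g"
    and "I' = identric a' g'" and "E = (I' / I) * ((a - g) / (a' - g'))"
  have r': "1 < r'" and "r' < r" using assms by (auto simp: r_def r'_def)
  then have r: "1 < r" by simp
  have "0 < I" "I < a" using identric_bounds[of g a] assms by (auto simp: I_def)
  moreover have "g' < I'" using identric_bounds[of g' a'] assms by (simp add: I'_def)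
  ultimately have "1 < I' / I" using assms by simp
  moreover have "1 < (a - g) / (a' - g')" using assms by simp
  ultimately have E: "1 < E" unfolding E_def by (rule less_1_mult)
  have L: "a - g = log_mean a g * ln r" "a' - g' = log_mean a' g' * ln r'"
    using r r' by (simp_all add: log_mean_def r_def r'_def)
  have "0 < log_mean a g" "0 < log_mean a' g'"
    using log_mean_bounds(1)[of g a] log_mean_bounds(1)[of g' a'] assms by auto
  moreover have "I' / log_mean a' g' < I / log_mean a g"
    using identric_div_log_mean_less[of g a g' a'] assms by (simp add: I_def I'_def)
  ultimately have "I' * log_mean a g < I * log_mean a' g'"
    by (simp add: divide_less_eq less_divide_eq field_simps)
  \<comment> \<open>by L, E * ln r' = (I' / log_mean a' g') / (I / log_mean a g) * ln r\<close>
  then have "E * ln r' < ln r"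
    using r r' \<open>0 < I\<close> \<open>0 < log_mean a' g'\<close> by (simp add: E_def L field_simps)
  then have "r' powr E < r"
    using r r' by (simp add: ln_less_cancel_iff[symmetric] del: ln_less_cancel_iff)
  moreover have "r' < r' powr E" using powr_less_mono[OF E r'] r' by simp
  ultimately show ?thesis unfolding r_def r'_def E_def I_def I'_def by simp
qed

lemma log_mean_ratio_eq:
  "((1 / (a' - g')) * ln (a' / g')) / ((1 / (a - g)) * ln (a / g))
    = log_mean a g / log_mean a' g'"
  by (simp add: log_mean_def ac_simps)

lemma mult_div_less_log_mean_ratio_sq:
  fixes a g a' g' :: real
  assumes "0 < g" "g < a" "0 < g'" "g' < a'" "a' / g' < a / g"
  shows "(a * g) / (a' * g') < (log_mean a g / log_mean a' g')^2"
proof -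
  have "0 < log_mean a g" "0 < log_mean a' g'"
    using log_mean_bounds(1)[of g a] log_mean_bounds(1)[of g' a'] assms by auto
  moreover have "(log_mean a' g')^2 / (a' * g') < (log_mean a g)^2 / (a * g)"
    using log_mean_sq_div_mult_less assms by blast
  ultimately show ?thesis
    using assms by (simp add: power_divide divide_less_eq less_divide_eq field_simps)
qed

lemma log_mean_ratio_bounds:
  fixes a g a' g' :: real and n :: nat
  assumes "0 < g" "g < a" "a \<le> g'" "g' < a'" "a' / g' < a / g" "1 \<le> n"
  shows "(a * g) / (a' * g') <
       min ((((1 / (a' - g')) * ln (a' / g')) / ((1 / (a - g)) * ln (a / g)))\<^sup>2)
           ((((1 / (a' ^ n - g' ^ n)) * ln (a' ^ n / g' ^ n))
              / ((1 / (a ^ n - g ^ n)) * ln (a ^ n / g ^ n))) powr (2 / real n))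
     \<and> min ((((1 / (a' - g')) * ln (a' / g')) / ((1 / (a - g)) * ln (a / g)))\<^sup>2)
           ((((1 / (a' ^ n - g' ^ n)) * ln (a' ^ n / g' ^ n))
              / ((1 / (a ^ n - g ^ n)) * ln (a ^ n / g ^ n))) powr (2 / real n)) < 1"
proof -
  define c Q Qn where "c = (a * g) / (a' * g')"
    and "Q = log_mean a g / log_mean a' g'"
    and "Qn = log_mean (a ^ n) (g ^ n) / log_mean (a' ^ n) (g' ^ n)"
  have pos: "0 < g'" "0 < a" "0 < a'" using assms by auto
  have "c < Q^2"
    using mult_div_less_log_mean_ratio_sq[of g a g' a'] assms by (simp add: c_def Q_def)
  moreover have "c < Qn powr (2 / n)"
  proof -
    have pow: "0 < g ^ n" "g ^ n < a ^ n" "0 < g' ^ n" "g' ^ n < a' ^ n"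
      "a' ^ n / g' ^ n < a ^ n / g ^ n"
      using assms pos by (auto simp: power_strict_mono power_divide[symmetric])
    from mult_div_less_log_mean_ratio_sq[OF pow]
    have "c ^ n < Qn ^ 2" by (simp add: c_def Qn_def power_divide power_mult_distrib)
    moreover have "0 < Qn"
      using log_mean_bounds(1)[OF pow(1,2)] log_mean_bounds(1)[OF pow(3,4)] pow
      unfolding Qn_def by (intro divide_pos_pos) linarith+
    moreover have "0 < c" using pos assms by (simp add: c_def)
    ultimately have "(c powr n) powr (1 / n) < (Qn powr 2) powr (1 / n)"
      using assms(6) by (intro powr_less_mono2) (auto simp: powr_realpow)
    then show ?thesis using assms(6) \<open>0 < c\<close> by (simp add: powr_powr)
  qed
  moreover have "Q < 1" "0 < Q"
    using log_mean_bounds(2)[of g a] log_mean_bounds(1)[of g a] log_mean_bounds(1)[of g' a'] assms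
    by (auto simp: Q_def)
  then have "Q^2 < 1" by (simp add: power_less_one_iff)
  ultimately show ?thesis
    unfolding log_mean_ratio_eq c_def[symmetric] Q_def[symmetric] Qn_def[symmetric] by simp
qed

theorem theorem4p3:
  fixes n :: nat and x :: "nat \<Rightarrow> real"
  assumes "n \<ge> 1"
    and "\<forall>i<n. 0 < x i \<and> x i \<le> 1/2"
    and "\<exists>i<n. \<exists>j<n. x i \<noteq> x j"
  defines "A \<equiv> AM n x" and "G \<equiv> GM n x" and "A' \<equiv> AM' n x" and "G' \<equiv> GM' n x"
  shows
    "(A' / G' < (A / G) powr (((A + G) / (A' + G')) * ((A' - G') / (A - G)))
     \<and> (A / G) powr (((A + G) / (A' + G')) * ((A' - G') / (A - G)))
         < min ((A / G) powr ((A + G) / (A' + G'))) ((A / G) powr ((A' - G') / (A - G)))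
     \<and> min ((A / G) powr ((A + G) / (A' + G'))) ((A / G) powr ((A' - G') / (A - G))) < A / G)
     \<and> (A' / G' < (A' / G') powr ((identric A' G' / identric A G) * ((A - G) / (A' - G')))
     \<and> (A' / G') powr ((identric A' G' / identric A G) * ((A - G) / (A' - G'))) < A / G)
     \<and> ((A * G) / (A' * G') <
       min ((((1 / (A' - G')) * ln (A' / G')) / ((1 / (A - G)) * ln (A / G)))\<^sup>2)
           ((((1 / (A' ^ n - G' ^ n)) * ln (A' ^ n / G' ^ n))
              / ((1 / (A ^ n - G ^ n)) * ln (A ^ n / G ^ n))) powr (2 / real n))
     \<and> min ((((1 / (A' - G')) * ln (A' / G')) / ((1 / (A - G)) * ln (A / G)))\<^sup>2)
           ((((1 / (A' ^ n - G' ^ n)) * ln (A' ^ n / G' ^ n))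
              / ((1 / (A ^ n - G ^ n)) * ln (A ^ n / G ^ n))) powr (2 / real n)) < 1)"
proof -
  have n: "n \<noteq> 0" using assms(1) by simp
  have pos: "\<forall>i<n. 0 < x i" and pos': "\<forall>i<n. 0 < 1 - x i" and half': "\<forall>i<n. 1/2 \<le> 1 - x i"
    using assms(2) by auto
  have nonconst': "\<exists>i<n. \<exists>j<n. 1 - x i \<noteq> 1 - x j" using assms(3) by auto
  have A': "A' = AM n (\<lambda>i. 1 - x i)" and G': "G' = GM n (\<lambda>i. 1 - x i)"
    by (simp_all add: A'_def G'_def AM'_def GM'_def AM_def GM_def)
  have "0 < G" "G < A" using GM_pos[OF pos] GM_lt_AM[OF pos assms(3)] by (simp_all add: A_def G_def)
  moreover have "A \<le> G'"
    using AM_mono[of n x "\<lambda>_. 1/2"] AM_const[OF n] GM_ge[OF n _ half'] assms(2)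
    by (simp add: A_def G')
  moreover have "G' < A'" using GM_lt_AM[OF pos' nonconst'] by (simp add: A' G')
  moreover have "A' / G' < A / G"
    using AM_GM_ratio_one_minus_less[OF assms(2,3)] by (simp add: A_def G_def A' G')
  moreover have "A' - G' < A - G"
    using AM_GM_gap_one_minus_less[OF assms(2,3)] by (simp add: A_def G_def A' G')
  ultimately show ?thesis
    using powr_bounds_of_mean_ratios identric_powr_bounds_of_mean_ratios
      log_mean_ratio_bounds[OF _ _ _ _ _ assms(1)]
    by blast
qed

end
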